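(* In a single positioning infrastructure in which $N_{\text{min}}$ is the minimum number of anchors required for positioning, a subset of anchors containing at least one manipulated (adversarial) pseudorange can contain at most $N_{\text{min}}-1$ benign pseudoranges without being detected; that is, any subset containing at least one adversarial and at least $N_{\text{min}}$ benign pseudoranges yields an inconsistent overdetermined system.
   Context: Idealized model: a platform at unknown true position in $\mathbf{R}^3$ receives ranging measurements (pseudoranges) from anchors with known positions; positioning from a subset solves a system with $N_{\text{min}}$ unknowns (e.g., 3D position plus receiver clock bias for GNSS, $N_{\text{min}}=4$) using one equation per anchor in the subset. Noise is taken to be negligible while attacker-induced deviations are preserved, and anchor geometry is good (the equations are linearly independent). Benign pseudoranges are exactly consistent with the true position; adversarial pseudoranges are deviated by the attacker. *)

theory Defs
  imports "HOL-Analysis.Analysis"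
begin

text \<open>Idealized (noise-free) positioning model. The unknown state (e.g. 3D position plus
receiver clock bias) lives in real^'n, so the number of unknowns is N_min = CARD('n).
Anchor i contributes one equation  h i x = rho i, where h i is the (known) ranging model
of anchor i and rho i is the received pseudorange.\<close>

definition benign :: "('a \<Rightarrow> real^'n \<Rightarrow> real) \<Rightarrow> ('a \<Rightarrow> real) \<Rightarrow> real^'n \<Rightarrow> 'a \<Rightarrow> bool" where
  "benign h rho xtrue i \<longleftrightarrow> rho i = h i xtrue"

definition adversarial :: "('a \<Rightarrow> real^'n \<Rightarrow> real) \<Rightarrow> ('a \<Rightarrow> real) \<Rightarrow> real^'n \<Rightarrow> 'a \<Rightarrow> bool" where
  "adversarial h rho xtrue i \<longleftrightarrow> rho i \<noteq> h i xtrue"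

definition good_geometry :: "'a set \<Rightarrow> ('a \<Rightarrow> real^'n \<Rightarrow> real) \<Rightarrow> bool" where
  "good_geometry A h \<longleftrightarrow>
     (\<forall>S\<subseteq>A. finite S \<and> card S = CARD('n) \<longrightarrow>
        (\<forall>x y. (\<forall>i\<in>S. h i x = h i y) \<longrightarrow> x = y))"

text \<open>The system of equations given by a subset S of anchors is consistent if some
state satisfies all of them (undetected); otherwise it is inconsistent (detected).\<close>
definition consistent :: "'a set \<Rightarrow> ('a \<Rightarrow> real^'n \<Rightarrow> real) \<Rightarrow> ('a \<Rightarrow> real) \<Rightarrow> bool" where
  "consistent S h rho \<longleftrightarrow> (\<exists>x::real^'n. \<forall>i\<in>S. h i x = rho i)"

end

theory Submission
  imports Defs
begin

text \<open>A solution of the system of S agrees with the true state on the benign anchors of S.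
If there are at least N_min of them, good geometry forces the solution to be the true
state, which then violates the equation of the adversarial anchor.\<close>

lemma good_geometry_unique:
  fixes h :: "'a \<Rightarrow> real^'n \<Rightarrow> real"
  assumes "good_geometry A h" and "T \<subseteq> A" and "finite T" and "card T \<ge> CARD('n)"
    and "\<forall>i\<in>T. h i x = h i y"
  shows "x = y"
proof -
  obtain U where U: "U \<subseteq> T" "card U = CARD('n)"
    using obtain_subset_with_card_n[OF assms(4)] by metis
  have "U \<subseteq> A" and "finite U"
    using U(1) assms(2,3) finite_subset by blast+
  with U(2) assms(1,5) U(1) show ?thesis
    unfolding good_geometry_def by blast
qed

lemma solution_eq_true_state:
  fixes h :: "'a \<Rightarrow> real^'n \<Rightarrow> real"
  assumes "good_geometry A h" and "S \<subseteq> A" and "finite S"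
    and "card {i\<in>S. benign h rho xtrue i} \<ge> CARD('n)"
    and "\<forall>i\<in>S. h i x = rho i"
  shows "x = xtrue"
proof -
  let ?B = "{i\<in>S. benign h rho xtrue i}"
  have "?B \<subseteq> A" and "finite ?B"
    using assms(2,3) by auto
  moreover have "\<forall>i\<in>?B. h i x = h i xtrue"
    using assms(5) by (simp add: benign_def)
  ultimately show ?thesis
    by (rule good_geometry_unique[OF assms(1) _ _ assms(4)])
qed

theorem corollary1:
  fixes A S :: "'a set"
    and h :: "'a \<Rightarrow> real^'n \<Rightarrow> real"
    and rho :: "'a \<Rightarrow> real"
    and xtrue :: "real^'n"
  assumes "good_geometry A h"
    and "S \<subseteq> A" and "finite S"
    and "\<exists>j\<in>S. adversarial h rho xtrue j"
    and "card {i\<in>S. benign h rho xtrue i} \<ge> CARD('n)"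
  shows "\<not> consistent S h rho"
proof
  assume "consistent S h rho"
  then obtain x :: "real^'n" where x: "\<forall>i\<in>S. h i x = rho i"
    unfolding consistent_def by blast
  with assms(1,2,3,5) have "x = xtrue"
    by (rule solution_eq_true_state)
  with x assms(4) show False
    by (auto simp: adversarial_def)
qed

end
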